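(* In the Classified Reallocation algorithm (with power-of-two laxities), suppose a client $c_i$ is reallocated to the big channel during the processing of a departure (because it lies in a $w$-channel with $w>2\tau$ after $\tau$ is updated). Let $n$ be the number of active clients at the time of this reallocation and $n'$ the number of active clients at the time of the last allocation of $c_i$. Then $n\le n'/2$.
   Context: Model: discrete time; each client $c_i$ has arrival time, departure time and laxity $w_i$ (a power of $2$), and must transmit at least once in every $w_i$ consecutive time steps while active; one transmission per channel per time step. A reallocation is a change of the channel of a client. For $x>0$, $\lceil\lceil x\rceil\rceil$ denotes the smallest power of $2$ not smaller than $x$. Classified Reallocation algorithm. Channels: one \emph{big channel} (all its clients transmit with period $\tau/2$) and \emph{$w$-channels} for powers of two $w$ (clients transmit with period $w$; at most $w$ clients; \emph{full} when holding $w$). State: $n$ (active clients, initially $0$), threshold $\tau$ (initially $2$). Arrival of $c_i$: $n\leftarrow n+1$. If $2\lceil\lceil n\rceil\rceil>\tau$: $\tau\leftarrow 2\lceil\lceil n\rceil\rceil$; each big-channel client $c_j$ with $w_j<\tau/2$ is reallocated to the non-full $w_j$-channel of minimum load (a new one reserved if needed); remaining big-channel clients get period $\tau/2$. Then if $w_i\ge\tau$, $c_i$ goes to the big channel; otherwise to the non-full $w_i$-channel of minimum load (new one reserved if needed). Departure of $c_i$ from channel $c$: $n\leftarrow n-1$. If $c$ is not the big channel: release $c$ if empty; otherwise if some $w_i$-channel $c'\ne c$ is not full, move one client from $c'$ to $c$. Then if $2\lceil\lceil n\rceil\rceil<\tau$: $\tau\leftarrow 2\lceil\lceil n\rceil\rceil$,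 big-channel clients get period $\tau/2$, and every $w$-channel with $w>2\tau$ has all its clients reallocated to the big channel and is released. *)

theory Defs
  imports Main
begin

text \<open>Channels: the big channel, or a w-channel identified by its class w and an index k.
  A w-channel exists iff it currently holds at least one active client
  (empty channels are released; reserving a new channel = using an unused index).
  Transmission schedules (periods) do not influence any decision of the
  algorithm and are not modelled.\<close>

datatype chan = Big | WCh nat nat

record cra_state =
  act   :: "nat set"
  seen  :: "nat set"          \<comment> \<open>clients that have already arrived (each client arrives once)\<close>
  loc   :: "nat \<Rightarrow> chan"
  nact  :: nat
  tau   :: nat
  lastn :: "nat \<Rightarrow> nat"      \<comment> \<open>value of n at the last allocation of each client\<close>

text \<open>Smallest power of two not smaller than x (for x = 0 this is 1).\<close>
definition clp2 :: "nat \<Rightarrow> nat" where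
  "clp2 x = (LEAST p. (\<exists>k. p = 2 ^ k) \<and> x \<le> p)"

definition load :: "cra_state \<Rightarrow> chan \<Rightarrow> nat" where
  "load s ch = card {j \<in> act s. loc s j = ch}"

definition existing :: "cra_state \<Rightarrow> chan \<Rightarrow> bool" where
  "existing s ch \<longleftrightarrow> 0 < load s ch"

definition wfull :: "cra_state \<Rightarrow> chan \<Rightarrow> bool" where
  "wfull s ch \<longleftrightarrow> (case ch of Big \<Rightarrow> False | WCh w k \<Rightarrow> w \<le> load s ch)"

definition choice :: "cra_state \<Rightarrow> nat \<Rightarrow> chan \<Rightarrow> bool" where
  "choice s w ch \<longleftrightarrow> (\<exists>k. ch = WCh w k) \<and> \<not> wfull s ch \<and>
     (if (\<exists>k. existing s (WCh w k) \<and> \<not> wfull s (WCh w k))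
      then existing s ch \<and>
           (\<forall>k. existing s (WCh w k) \<and> \<not> wfull s (WCh w k) \<longrightarrow> load s ch \<le> load s (WCh w k))
      else load s ch = 0)"

text \<open>Sequential reallocation of a list of clients (in the given order) from the
  big channel to w-channels; each such reallocation is an allocation.\<close>
inductive realloc :: "(nat \<Rightarrow> nat) \<Rightarrow> nat list \<Rightarrow> cra_state \<Rightarrow> cra_state \<Rightarrow> bool"
  for lax :: "nat \<Rightarrow> nat" where
  realloc_Nil: "realloc lax [] s s"
| realloc_Cons: "choice s (lax j) ch \<Longrightarrow>
     realloc lax js (s\<lparr>loc := (loc s)(j := ch), lastn := (lastn s)(j := nact s)\<rparr>) s' \<Longrightarrow>
     realloc lax (j # js) s s'"

definition arrive :: "(nat \<Rightarrow> nat) \<Rightarrow> nat \<Rightarrow> cra_state \<Rightarrow> cra_state \<Rightarrow> bool" where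
  "arrive lax i s s' \<longleftrightarrow> i \<notin> seen s \<and>
     (let s1 = s\<lparr>seen := insert i (seen s), nact := Suc (nact s)\<rparr>;
          T = 2 * clp2 (nact s1) in
      \<exists>s2. (if tau s1 < T then
              (\<exists>js. distinct js \<and>
                    set js = {j \<in> act s1. loc s1 j = Big \<and> lax j < T div 2} \<and>
                    realloc lax js (s1\<lparr>tau := T\<rparr>) s2)
            else s2 = s1) \<and>
           (\<exists>ch. (if tau s2 \<le> lax i then ch = Big else choice s2 (lax i) ch) \<and>
                 s' = s2\<lparr>act := insert i (act s2), loc := (loc s2)(i := ch),
                         lastn := (lastn s2)(i := nact s2)\<rparr>))"

text \<open>A client in channel ch is sent to the big channel when tau becomes T.\<close>
definition released :: "nat \<Rightarrow> chan \<Rightarrow> bool" where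
  "released T ch \<longleftrightarrow> (case ch of Big \<Rightarrow> False | WCh w k \<Rightarrow> 2 * T < w)"

definition depart :: "(nat \<Rightarrow> nat) \<Rightarrow> nat \<Rightarrow> cra_state \<Rightarrow> cra_state \<Rightarrow> bool" where
  "depart lax i s s' \<longleftrightarrow> i \<in> act s \<and>
     (let c = loc s i;
          s1 = s\<lparr>act := act s - {i}, nact := nact s - 1\<rparr> in
      \<exists>s2. (case c of
              Big \<Rightarrow> s2 = s1
            | WCh w k \<Rightarrow>
               (if load s1 c = 0 then s2 = s1
                else if (\<exists>k'. k' \<noteq> k \<and> existing s1 (WCh w k') \<and> \<not> wfull s1 (WCh w k'))
                then (\<exists>k' j. k' \<noteq> k \<and> existing s1 (WCh w k') \<and> \<not> wfull s1 (WCh w k') \<and>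
                             j \<in> act s1 \<and> loc s1 j = WCh w k' \<and>
                             s2 = s1\<lparr>loc := (loc s1)(j := c)\<rparr>)
                else s2 = s1)) \<and>
           (let T = 2 * clp2 (nact s2) in
            if T < tau s2 then
              s' = s2\<lparr>tau := T,
                      loc := (\<lambda>j. if j \<in> act s2 \<and> released T (loc s2 j) then Big else loc s2 j),
                      lastn := (\<lambda>j. if j \<in> act s2 \<and> released T (loc s2 j) then nact s2 else lastn s2 j)\<rparr>
            else s' = s2))"

definition step :: "(nat \<Rightarrow> nat) \<Rightarrow> cra_state \<Rightarrow> cra_state \<Rightarrow> bool" where
  "step lax s s' \<longleftrightarrow> (\<exists>i. arrive lax i s s' \<or> depart lax i s s')"

definition init :: cra_state where
  "init = \<lparr>act = {}, seen = {}, loc = (\<lambda>_. Big), nact = 0, tau = 2, lastn = (\<lambda>_. 0)\<rparr>"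

end

theory Submission
  imports Defs
begin

text \<open>A client enters a w-channel only when w < tau, and tau never exceeds 2 clp2 n; so a client
  sitting in a w-channel satisfies w < 2 clp2 n', with n' the value of n at its last allocation.
  It is moved back to the big channel only when w > 2 tau = 4 clp2 n. Hence
  2 clp2 n < clp2 n', and since both sides are powers of two, 4 clp2 n \<le> clp2 n' < 2 n'.\<close>

lemma clp2_pow2_ge: "(\<exists>k. clp2 x = 2 ^ k) \<and> x \<le> clp2 x"
proof -
  have "\<exists>p. (\<exists>k. p = (2::nat) ^ k) \<and> x \<le> p"
    by (rule exI[of _ "2 ^ x"]) (auto intro: less_imp_le)
  then show ?thesis unfolding clp2_def by (rule LeastI_ex)
qed

lemma clp2_least: "p = 2 ^ k \<Longrightarrow> x \<le> p \<Longrightarrow> clp2 x \<le> p"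
  unfolding clp2_def by (rule Least_le) auto

lemma clp2_mono: "x \<le> y \<Longrightarrow> clp2 x \<le> clp2 y"
  using clp2_pow2_ge[of y] by (auto intro: clp2_least)

lemma clp2_0: "clp2 0 = 1"
proof -
  obtain k where "clp2 0 = 2 ^ k" using clp2_pow2_ge by blast
  moreover have "clp2 0 \<le> 1" by (rule clp2_least[of _ 0]) simp_all
  moreover have "(1::nat) \<le> 2 ^ k" by simp
  ultimately show ?thesis by linarith
qed

lemma clp2_less_double: "0 < x \<Longrightarrow> clp2 x < 2 * x"
proof (rule ccontr)
  assume "0 < x" "\<not> clp2 x < 2 * x"
  moreover obtain k where k: "clp2 x = 2 ^ k" using clp2_pow2_ge by blast
  ultimately obtain m where "k = Suc m" "x \<le> 2 ^ m"
    by (cases k) auto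
  then have "clp2 x \<le> 2 ^ m" by (intro clp2_least) auto
  with k \<open>k = Suc m\<close> show False by simp
qed

lemma pow2_less_imp_double_le:
  assumes "(2::nat) ^ a < 2 ^ b" shows "2 * 2 ^ a \<le> (2::nat) ^ b"
proof -
  have "a < b" using assms by simp
  then show ?thesis using power_increasing[of "Suc a" b "2::nat"] by simp
qed

lemma double_less_of_double_clp2_less: "2 * clp2 n < clp2 L \<Longrightarrow> 2 * n < L"
proof -
  assume gap: "2 * clp2 n < clp2 L"
  obtain a b where a: "clp2 n = 2 ^ a" and b: "clp2 L = 2 ^ b" using clp2_pow2_ge by metis
  have "4 * clp2 n \<le> clp2 L"
    using pow2_less_imp_double_le[of "Suc a" b] gap a b by simp
  moreover have "0 < L" using gap a by (cases L) (auto simp: clp2_0)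
  ultimately have "4 * clp2 n < 2 * L" using clp2_less_double[of L] by linarith
  then show ?thesis using clp2_pow2_ge[of n] by linarith
qed

fun chan_class :: "chan \<Rightarrow> nat option" where
  "chan_class Big = None"
| "chan_class (WCh w k) = Some w"

definition wch_lax_bounded :: "cra_state \<Rightarrow> bool" where
  "wch_lax_bounded s \<longleftrightarrow>
     (\<forall>j\<in>act s. \<forall>w. chan_class (loc s j) = Some w \<longrightarrow> w < 2 * clp2 (lastn s j))"

definition cra_inv :: "cra_state \<Rightarrow> bool" where
  "cra_inv s \<longleftrightarrow> tau s \<le> 2 * clp2 (nact s) \<and> wch_lax_bounded s"

lemma choice_class: "choice s w ch \<Longrightarrow> chan_class ch = Some w"
  unfolding choice_def by auto

lemma realloc_preserves_bound:
  assumes "realloc lax js s s'" "\<forall>j\<in>set js. lax j < 2 * clp2 (nact s)" "wch_lax_bounded s"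
  shows "wch_lax_bounded s' \<and> nact s' = nact s \<and> tau s' = tau s"
  using assms
proof (induction rule: realloc.induct)
  case (realloc_Nil s)
  then show ?case by simp
next
  case (realloc_Cons s j ch js s')
  then have "chan_class ch = Some (lax j)" by (simp add: choice_class)
  with realloc_Cons.prems
  have "wch_lax_bounded (s\<lparr>loc := (loc s)(j := ch), lastn := (lastn s)(j := nact s)\<rparr>)"
    by (auto simp: wch_lax_bounded_def)
  with realloc_Cons.prems realloc_Cons.IH show ?case by simp
qed

lemma arrive_preserves_inv:
  assumes ar: "arrive lax i s s'" and inv: "cra_inv s"
  shows "cra_inv s'"
proof -
  let ?s1 = "s\<lparr>seen := insert i (seen s), nact := Suc (nact s)\<rparr>"
  let ?T = "2 * clp2 (nact ?s1)"
  obtain s2 ch where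
    grow: "if tau ?s1 < ?T then
             \<exists>js. distinct js \<and> set js = {j \<in> act ?s1. loc ?s1 j = Big \<and> lax j < ?T div 2} \<and>
                  realloc lax js (?s1\<lparr>tau := ?T\<rparr>) s2
           else s2 = ?s1"
    and place: "if tau s2 \<le> lax i then ch = Big else choice s2 (lax i) ch"
    and s': "s' = s2\<lparr>act := insert i (act s2), loc := (loc s2)(i := ch),
                      lastn := (lastn s2)(i := nact s2)\<rparr>"
    using ar unfolding arrive_def Let_def by blast
  have bounded1: "wch_lax_bounded (?s1\<lparr>tau := t\<rparr>)" for t
    using inv by (simp add: cra_inv_def wch_lax_bounded_def)
  have s2: "wch_lax_bounded s2 \<and> nact s2 = Suc (nact s) \<and> tau s2 \<le> ?T"
  proof (cases "tau s < ?T")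
    case True
    with grow obtain js where "set js = {j \<in> act ?s1. loc ?s1 j = Big \<and> lax j < ?T div 2}"
      "realloc lax js (?s1\<lparr>tau := ?T\<rparr>) s2" by auto
    with bounded1 show ?thesis using realloc_preserves_bound[of lax js "?s1\<lparr>tau := ?T\<rparr>" s2] by auto
  next
    case False
    have "clp2 (nact s) \<le> clp2 (Suc (nact s))" by (rule clp2_mono) simp
    with False grow bounded1[of "tau s"] inv show ?thesis by (simp add: cra_inv_def)
  qed
  have "w < 2 * clp2 (nact s2)" if "chan_class ch = Some w" for w
    using that place s2 by (auto split: if_splits dest: choice_class)
  with s2 s' show ?thesis
    by (auto simp: cra_inv_def wch_lax_bounded_def)
qed

definition shrink_tau :: "cra_state \<Rightarrow> cra_state \<Rightarrow> bool" where
  "shrink_tau s2 s' \<longleftrightarrow>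
     (let T = 2 * clp2 (nact s2) in
      if T < tau s2 then
        s' = s2\<lparr>tau := T,
                loc := (\<lambda>j. if j \<in> act s2 \<and> released T (loc s2 j) then Big else loc s2 j),
                lastn := (\<lambda>j. if j \<in> act s2 \<and> released T (loc s2 j) then nact s2 else lastn s2 j)\<rparr>
      else s' = s2)"

lemma depart_split:
  assumes "depart lax i s s'"
  obtains s2 where "act s2 = act s - {i}" "lastn s2 = lastn s" "chan_class \<circ> loc s2 = chan_class \<circ> loc s" "shrink_tau s2 s'"
proof -
  let ?s1 = "s\<lparr>act := act s - {i}, nact := nact s - 1\<rparr>"
  obtain s2 where
    rebalance: "case loc s i of
        Big \<Rightarrow> s2 = ?s1
      | WCh w k \<Rightarrow>
         (if load ?s1 (loc s i) = 0 then s2 = ?s1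
          else if \<exists>k'. k' \<noteq> k \<and> existing ?s1 (WCh w k') \<and> \<not> wfull ?s1 (WCh w k')
          then \<exists>k' j. k' \<noteq> k \<and> existing ?s1 (WCh w k') \<and> \<not> wfull ?s1 (WCh w k') \<and>
                     j \<in> act ?s1 \<and> loc ?s1 j = WCh w k' \<and>
                     s2 = ?s1\<lparr>loc := (loc ?s1)(j := loc s i)\<rparr>
          else s2 = ?s1)"
    and shrink: "shrink_tau s2 s'"
    using assms unfolding depart_def shrink_tau_def Let_def by blast
  have "s2 = ?s1 \<or> (\<exists>j w k k'. loc s i = WCh w k \<and> loc s j = WCh w k' \<and>
      s2 = ?s1\<lparr>loc := (loc s)(j := WCh w k)\<rparr>)"
  proof (cases "loc s i")
    case Big
    with rebalance show ?thesis by simp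
  next
    case (WCh w k)
    with rebalance show ?thesis by (auto split: if_splits)
  qed
  then have "act s2 = act s - {i} \<and> lastn s2 = lastn s \<and> chan_class \<circ> loc s2 = chan_class \<circ> loc s"
    by (auto simp: fun_eq_iff)
  with shrink that show ?thesis by blast
qed

lemma depart_preserves_inv:
  assumes "depart lax i s s'" "cra_inv s"
  shows "cra_inv s'"
proof -
  obtain s2 where s2: "act s2 = act s - {i}" "lastn s2 = lastn s"
    "chan_class \<circ> loc s2 = chan_class \<circ> loc s" and shrink: "shrink_tau s2 s'"
    by (rule depart_split[OF assms(1)])
  have "wch_lax_bounded s2"
    using assms(2) s2 unfolding cra_inv_def wch_lax_bounded_def
    by (metis DiffD1 comp_apply)
  then show ?thesis
    using shrink unfolding shrink_tau_def Let_def
    by (auto simp: cra_inv_def wch_lax_bounded_def split: if_splits)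
qed

lemma reachable_inv: "(step lax)\<^sup>*\<^sup>* init s \<Longrightarrow> cra_inv s"
proof (induction rule: rtranclp_induct)
  case base
  then show ?case by (simp add: init_def cra_inv_def wch_lax_bounded_def clp2_0)
next
  case (step s s')
  then show ?case
    unfolding step_def using arrive_preserves_inv depart_preserves_inv by blast
qed

lemma shrink_tau_to_big:
  assumes "shrink_tau s2 s'" "c \<in> act s'" "loc s2 c \<noteq> Big" "loc s' c = Big"
  shows "c \<in> act s2 \<and> nact s' = nact s2 \<and>
    (\<exists>w. chan_class (loc s2 c) = Some w \<and> 4 * clp2 (nact s2) < w)"
  using assms unfolding shrink_tau_def Let_def released_def
  by (auto split: if_splits chan.splits)

theorem lemma3:
  fixes lax :: "nat \<Rightarrow> nat" and s s' :: cra_state and i c :: nat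
  assumes "\<forall>j. \<exists>k. lax j = 2 ^ k"
    and "(step lax)\<^sup>*\<^sup>* init s"
    and "depart lax i s s'"
    and "c \<in> act s'" and "loc s c \<noteq> Big" and "loc s' c = Big"
  shows "2 * nact s' \<le> lastn s c"
proof -
  obtain s2 where s2: "act s2 = act s - {i}" "lastn s2 = lastn s"
    "chan_class \<circ> loc s2 = chan_class \<circ> loc s" and shrink: "shrink_tau s2 s'"
    by (rule depart_split[OF assms(3)])
  have same_class: "chan_class (loc s2 c) = chan_class (loc s c)"
    using s2(3) by (metis comp_apply)
  then have "loc s2 c \<noteq> Big" using assms(5) by (cases "loc s c") (auto elim: chan_class.elims)
  with shrink_tau_to_big[OF shrink assms(4) _ assms(6)] obtain w where
    "c \<in> act s" "nact s' = nact s2" "chan_class (loc s c) = Some w" "4 * clp2 (nact s2) < w"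
    using s2(1) same_class by auto
  moreover have "w < 2 * clp2 (lastn s c)"
    using reachable_inv[OF assms(2)] calculation
    unfolding cra_inv_def wch_lax_bounded_def by blast
  ultimately show ?thesis using double_less_of_double_clp2_less[of "nact s2" "lastn s c"] by simp
qed

end
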